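(* Let $(X,\xi)$ be a probability space, and let $f\in L^1(X,\xi)$ be non-negative. Then there is an increasing $1$-Lipschitz function $\psi:[0,\infty)\to[0,\infty)$ with $\lim_{y\to\infty}\psi(y)=\infty$ such that, setting $\Psi(y)=\int_0^y\psi(z)\,dz$ for $y\ge0$, one has $\Psi(f)\in L^1(X,\xi)$. Moreover, the function $F:[0,\infty)\to[0,\infty)$, $F(y)=\Psi(\log(1+y))$, is increasing and differentiable on $[0,\infty)$, and there exists $M>0$ such that \[ F(y+y')\le F(y)+F(y')+M\quad\text{for all }y,y'\ge0. \] *)

theory Defs
  imports "HOL-Probability.Probability"
begin

definition Prim :: "(real \<Rightarrow> real) \<Rightarrow> real \<Rightarrow> real" where
  "Prim \<psi> y = integral {0..y} \<psi>"

end

theory Submission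
  imports Defs
begin

(* Since f is integrable, its tail integrals (the integral of |f| over {|f| > m}) tend to 0, so one
   can pick n_0 \<le> n_1 \<le> ... with n_j \<ge> j and tail integral at n_j below 2^-j. The function
   \<psi>(y) = inf_k (k + max 0 (y - n_k)) is 1-Lipschitz, vanishes at 0, tends to infinity and
   satisfies y \<psi>(y) \<le> \<Sum>_j y [n_j < y]; hence \<Psi>(f) \<le> |f| \<psi>(|f|) has integral at most
   \<Sum>_j 2^-j.
   The almost subadditivity of F holds for every such \<psi>: for y \<ge> y' put
   u = log(1+y), v = log(1+y'), L = log(1+y+y') and r = y'/(1+y); then L - u \<le> r and
   r (u - v) \<le> 1, so \<Psi>(L) - \<Psi>(u) \<le> r \<psi>(L) \<le> \<psi>(v) + 2 \<le> \<Psi>(v) + 3. *)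

definition psi_seq :: "(nat \<Rightarrow> nat) \<Rightarrow> real \<Rightarrow> real" where
  "psi_seq n y = (INF k. real k + max 0 (y - real (n k)))"

lemma psi_seq_le: "psi_seq n y \<le> real k + max 0 (y - real (n k))"
  unfolding psi_seq_def by (rule cINF_lower) (auto intro: bdd_belowI[where m=0])

lemma psi_seq_greatest: "(\<And>k. c \<le> real k + max 0 (y - real (n k))) \<Longrightarrow> c \<le> psi_seq n y"
  unfolding psi_seq_def by (rule cINF_greatest) auto

lemma psi_seq_nonneg: "0 \<le> psi_seq n y"
  by (rule psi_seq_greatest) auto

lemma psi_seq_zero: "psi_seq n 0 = 0"
  using psi_seq_le[of n 0 0] psi_seq_nonneg[of n 0] by simp

lemma psi_seq_le_index: "y \<le> real (n k) \<Longrightarrow> psi_seq n y \<le> real k"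
  using psi_seq_le[of n y k] by simp

lemma mono_psi_seq: "mono (psi_seq n)"
proof (rule monoI, rule psi_seq_greatest)
  fix y z :: real and k assume "y \<le> z"
  then show "psi_seq n y \<le> real k + max 0 (z - real (n k))"
    using psi_seq_le[of n y k] by (auto simp: max_def split: if_splits)
qed

lemma lipschitz_psi_seq: "1-lipschitz_on S (psi_seq n)"
proof (rule lipschitz_onI)
  have "psi_seq n y \<le> psi_seq n z + \<bar>y - z\<bar>" for y z
  proof -
    have "psi_seq n y - \<bar>y - z\<bar> \<le> psi_seq n z"
    proof (rule psi_seq_greatest)
      fix k show "psi_seq n y - \<bar>y - z\<bar> \<le> real k + max 0 (z - real (n k))"
        using psi_seq_le[of n y k] by (auto simp: max_def abs_if split: if_splits)
    qed
    then show ?thesis by simp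
  qed
  then show "dist (psi_seq n y) (psi_seq n z) \<le> 1 * dist y z" for y z
    by (smt (verit) dist_real_def)
qed simp

lemma filterlim_psi_seq_at_top:
  assumes "mono n"
  shows "filterlim (psi_seq n) at_top at_top"
  unfolding filterlim_at_top
proof
  fix Z :: real
  define K where "K = nat \<lceil>Z\<rceil>"
  have "real K \<le> psi_seq n y" if "real (n K) + K \<le> y" for y
  proof (rule psi_seq_greatest)
    fix k
    show "real K \<le> real k + max 0 (y - real (n k))"
    proof (cases "K \<le> k")
      case False
      then have "n k \<le> n K" using assms by (simp add: monoD)
      then show ?thesis using that by linarith
    qed simp
  qed
  moreover have "Z \<le> real K" unfolding K_def by linarith
  ultimately show "\<forall>\<^sub>F y in at_top. Z \<le> psi_seq n y"
    unfolding eventually_at_top_linorder by (meson order_trans)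
qed

lemma mult_psi_seq_le_suminf:
  assumes n: "\<And>j. j \<le> n j" and t: "0 \<le> t"
  shows "ennreal (t * psi_seq n t) \<le> (\<Sum>j. ennreal (if real (n j) < t then t else 0))"
proof -
  define k where "k = (LEAST k. t \<le> real (n k))"
  have "t \<le> real (n (nat \<lceil>t\<rceil>))"
    using n[of "nat \<lceil>t\<rceil>"] by linarith
  then have tk: "t \<le> real (n k)"
    unfolding k_def by (rule LeastI)
  have below: "real (n j) < t" if "j < k" for j
    using not_less_Least[OF that[unfolded k_def]] by simp
  have "t * psi_seq n t \<le> t * real k"
    using psi_seq_le_index[of t n k, OF tk] t by (simp add: mult_left_mono)
  also have "\<dots> = (\<Sum>j<k. if real (n j) < t then t else 0)"
    using below by simp
  finally have "ennreal (t * psi_seq n t) \<le> ennreal (\<Sum>j<k. if real (n j) < t then t else 0)"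
    by (rule ennreal_leI)
  also have "\<dots> = (\<Sum>j<k. ennreal (if real (n j) < t then t else 0))"
    using t by (simp add: sum_ennreal)
  also have "\<dots> \<le> (\<Sum>j. ennreal (if real (n j) < t then t else 0))"
    by (rule sum_le_suminf) (auto intro: summableI)
  finally show ?thesis .
qed

lemma tail_integral_tendsto_zero:
  fixes g :: "'a \<Rightarrow> real"
  assumes "integrable M g"
  shows "(\<lambda>m::nat. \<integral>x. (if real m < g x then g x else 0) \<partial>M) \<longlonglongrightarrow> 0"
proof -
  have "(\<lambda>m::nat. \<integral>x. (if real m < g x then g x else 0) \<partial>M) \<longlonglongrightarrow> (\<integral>x. 0 \<partial>M)"
  proof (rule integral_dominated_convergence[where w="\<lambda>x. \<bar>g x\<bar>"])
    show "AE x in M. (\<lambda>m::nat. if real m < g x then g x else 0) \<longlonglongrightarrow> 0"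
    proof (rule AE_I2)
      fix x
      have "\<forall>\<^sub>F m in sequentially. (if real m < g x then g x else 0) = 0"
        unfolding eventually_sequentially
        by (rule exI[where x="nat \<lceil>g x\<rceil>"]) (auto simp: nat_ceiling_le_eq)
      then show "(\<lambda>m::nat. if real m < g x then g x else 0) \<longlonglongrightarrow> 0"
        by (rule tendsto_eventually)
    qed
  qed (use assms borel_measurable_integrable[OF assms] in auto)
  then show ?thesis by simp
qed

lemma obtain_subseq_below_geometric:
  fixes a :: "nat \<Rightarrow> real"
  assumes "a \<longlonglongrightarrow> 0"
  obtains n :: "nat \<Rightarrow> nat" where "mono n" "\<And>j. j \<le> n j" "\<And>j. a (n j) < (1/2)^j"
proof -
  have "\<forall>\<^sub>F m in sequentially. a m < (1/2)^j" for j :: nat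
    by (rule order_tendstoD(2)[OF assms]) simp
  then obtain N where N: "\<And>j m. N j \<le> m \<Longrightarrow> a m < (1/2)^j"
    unfolding eventually_sequentially by metis
  define n where "n j = j + (\<Sum>i\<le>j. N i)" for j
  have "mono n"
    unfolding n_def by (intro monoI add_mono sum_mono2) auto
  moreover have "N j \<le> n j" for j
    using member_le_sum[of j "{..j}" N] unfolding n_def by simp
  ultimately show ?thesis
    using that N unfolding n_def by auto
qed

lemma integrable_mult_psi_seq:
  fixes g :: "'a \<Rightarrow> real"
  assumes g: "integrable M g" "\<And>x. 0 \<le> g x"
    and n: "\<And>j. j \<le> n j"
    and tails: "\<And>j. (\<integral>x. (if real (n j) < g x then g x else 0) \<partial>M) \<le> (1/2)^j"
  shows "integrable M (\<lambda>x. g x * psi_seq n (g x))"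
proof (rule integrableI_nonneg)
  have gm: "g \<in> borel_measurable M"
    using g(1) by (rule borel_measurable_integrable)
  show "(\<lambda>x. g x * psi_seq n (g x)) \<in> borel_measurable M"
    using gm borel_measurable_mono[OF mono_psi_seq] by measurable
  show "AE x in M. 0 \<le> g x * psi_seq n (g x)"
    using g(2) by (simp add: psi_seq_nonneg)
  define s where "s j x = (if real (n j) < g x then g x else 0)" for j x
  have sm: "s j \<in> borel_measurable M" for j
    unfolding s_def using gm by measurable
  have si: "integrable M (s j)" for j
    by (rule Bochner_Integration.integrable_bound[OF g(1) sm]) (auto simp: s_def g(2))
  have "(\<integral>\<^sup>+x. ennreal (g x * psi_seq n (g x)) \<partial>M) \<le> (\<integral>\<^sup>+x. (\<Sum>j. ennreal (s j x)) \<partial>M)"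
    unfolding s_def by (intro nn_integral_mono mult_psi_seq_le_suminf n g(2))
  also have "\<dots> = (\<Sum>j. \<integral>\<^sup>+x. ennreal (s j x) \<partial>M)"
    by (rule nn_integral_suminf) (use sm in measurable)
  also have "\<dots> = (\<Sum>j. ennreal (\<integral>x. s j x \<partial>M))"
    by (subst nn_integral_eq_integral[OF si]) (auto simp: s_def g(2))
  also have "\<dots> \<le> (\<Sum>j. ennreal ((1/2)^j))"
    by (intro suminf_le ennreal_leI summableI) (simp add: s_def tails)
  also have "\<dots> = ennreal (\<Sum>j. (1/2)^j)"
    by (rule suminf_ennreal2) auto
  also have "\<dots> < \<infinity>"
    by simp
  finally show "(\<integral>\<^sup>+x. ennreal (g x * psi_seq n (g x)) \<partial>M) < \<infinity>" .
qed

lemma obtain_psi_seq_integrable: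
  fixes g :: "'a \<Rightarrow> real"
  assumes "integrable M g" "\<And>x. 0 \<le> g x"
  obtains n where "mono n" "integrable M (\<lambda>x. g x * psi_seq n (g x))"
proof -
  obtain n where "mono n" "\<And>j. j \<le> n j"
    and "\<And>j. (\<integral>x. (if real (n j) < g x then g x else 0) \<partial>M) < (1/2)^j"
    using obtain_subseq_below_geometric[OF tail_integral_tendsto_zero[OF assms(1)]] by blast
  then show ?thesis
    using that integrable_mult_psi_seq[OF assms] by (meson less_imp_le)
qed

lemma integrable_on_nonneg_Icc:
  fixes p :: "real \<Rightarrow> real"
  assumes "continuous_on {0..} p" "0 \<le> a"
  shows "p integrable_on {a..b}"
  using assms by (intro integrable_continuous_real) (auto elim: continuous_on_subset)

lemma Prim_eq_0: "y < 0 \<Longrightarrow> Prim p y = 0"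
  unfolding Prim_def by simp

lemma Prim_diff:
  assumes "continuous_on {0..} p" "0 \<le> a" "a \<le> b"
  shows "Prim p b - Prim p a = integral {a..b} p"
  unfolding Prim_def
  using Henstock_Kurzweil_Integration.integral_combine[where a=0 and c=a and b=b, OF _ _ integrable_on_nonneg_Icc[OF assms(1) order_refl]]
    assms by simp

lemma Prim_nonneg:
  assumes "continuous_on {0..} p" "\<And>y. 0 \<le> y \<Longrightarrow> 0 \<le> p y"
  shows "0 \<le> Prim p y"
  unfolding Prim_def
  by (rule integral_nonneg[OF integrable_on_nonneg_Icc[OF assms(1) order_refl]]) (simp add: assms(2))

lemma mono_Prim:
  assumes "continuous_on {0..} p" "\<And>y. 0 \<le> y \<Longrightarrow> 0 \<le> p y"
  shows "mono (Prim p)"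
proof (rule monoI)
  fix s t :: real assume "s \<le> t"
  show "Prim p s \<le> Prim p t"
  proof (cases "s < 0")
    case True
    then show ?thesis using Prim_eq_0 Prim_nonneg[OF assms] by simp
  next
    case False
    have "0 \<le> integral {s..t} p"
      using False by (intro integral_nonneg integrable_on_nonneg_Icc assms) auto
    then show ?thesis using Prim_diff[OF assms(1), of s t] False \<open>s \<le> t\<close> by simp
  qed
qed

lemma integral_mono_on_le_right:
  fixes p :: "real \<Rightarrow> real"
  assumes "continuous_on {0..} p" "mono_on {0..} p" "0 \<le> a" "a \<le> b"
  shows "integral {a..b} p \<le> (b - a) * p b"
proof -
  have "integral {a..b} p \<le> integral {a..b} (\<lambda>_. p b)"
    using assms by (intro integral_le integrable_on_nonneg_Icc integrable_const_ivl) (auto intro: mono_onD)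
  then show ?thesis using assms(4) by simp
qed

lemma integral_mono_on_ge_left:
  fixes p :: "real \<Rightarrow> real"
  assumes "continuous_on {0..} p" "mono_on {0..} p" "0 \<le> a" "a \<le> b"
  shows "(b - a) * p a \<le> integral {a..b} p"
proof -
  have "integral {a..b} (\<lambda>_. p a) \<le> integral {a..b} p"
    using assms by (intro integral_le integrable_on_nonneg_Icc integrable_const_ivl) (auto intro: mono_onD)
  then show ?thesis using assms(4) by simp
qed

lemma Prim_le_mult:
  assumes "continuous_on {0..} p" "mono_on {0..} p" "0 \<le> t"
  shows "Prim p t \<le> t * p t"
  using integral_mono_on_le_right[OF assms(1,2) order_refl assms(3)] unfolding Prim_def by simp

lemma has_field_derivative_Prim:
  assumes "continuous_on {0..} p" "0 \<le> t"
  shows "(Prim p has_field_derivative p t) (at t within {0..})"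
proof -
  have "(Prim p has_field_derivative p t) (at t within {0..t+1})"
    unfolding Prim_def[abs_def]
    by (rule integral_has_real_derivative) (use assms in \<open>auto elim: continuous_on_subset\<close>)
  moreover have "at t within {0..t+1} = at t within {0..}"
    by (rule at_within_nhd[where S="{t-1<..<t+1}"]) auto
  ultimately show ?thesis by simp
qed

lemma differentiable_Prim_ln:
  assumes "continuous_on {0..} p" "0 \<le> y"
  shows "(\<lambda>y. Prim p (ln (1 + y))) differentiable (at y within {0..})"
proof -
  have "(Prim p has_field_derivative p (ln (1 + y)))
      (at (ln (1 + y)) within (\<lambda>y. ln (1 + y)) ` {0..})"
    by (rule DERIV_subset[OF has_field_derivative_Prim[OF assms(1)]]) (use assms(2) in auto)
  moreover have "((\<lambda>y. ln (1 + y)) has_field_derivative 1 / (1 + y)) (at y within {0..})"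
    using assms(2) by (auto intro!: derivative_eq_intros)
  ultimately have "((\<lambda>y. Prim p (ln (1 + y))) has_field_derivative p (ln (1 + y)) * (1 / (1 + y)))
      (at y within {0..})"
    by (rule DERIV_image_chain[unfolded comp_def])
  then show ?thesis
    by (meson differentiableI has_field_derivative_imp_has_derivative)
qed

lemma integrable_Prim_comp:
  fixes f :: "'a \<Rightarrow> real"
  assumes cont: "continuous_on {0..} p" and nonneg: "\<And>y. 0 \<le> y \<Longrightarrow> 0 \<le> p y"
    and mono: "mono_on {0..} p"
    and f: "f \<in> borel_measurable M" and bound: "integrable M (\<lambda>x. \<bar>f x\<bar> * p \<bar>f x\<bar>)"
  shows "integrable M (\<lambda>x. Prim p (f x))"
proof (rule Bochner_Integration.integrable_bound[OF bound])
  show "(\<lambda>x. Prim p (f x)) \<in> borel_measurable M"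
    using borel_measurable_mono[OF mono_Prim[OF cont nonneg]] f by measurable
  have "norm (Prim p y) \<le> norm (\<bar>y\<bar> * p \<bar>y\<bar>)" for y
  proof (cases "y < 0")
    case False
    then show ?thesis
      using Prim_le_mult[OF cont mono] Prim_nonneg[OF cont nonneg] nonneg by (simp add: abs_mult)
  qed (simp add: Prim_eq_0)
  then show "AE x in M. norm (Prim p (f x)) \<le> norm (\<bar>f x\<bar> * p \<bar>f x\<bar>)"
    by simp
qed

lemma ln_one_plus_add_diff_le:
  fixes y y' :: real
  assumes "0 \<le> y" "0 \<le> y'"
  shows "ln (1 + (y + y')) - ln (1 + y) \<le> y' / (1 + y)"
proof -
  have "ln (1 + (y + y')) - ln (1 + y) = ln ((1 + (y + y')) / (1 + y))"
    using assms by (simp add: ln_div)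
  also have "\<dots> \<le> (1 + (y + y')) / (1 + y) - 1"
    by (rule ln_le_minus_one) (use assms in simp)
  also have "\<dots> = y' / (1 + y)"
    using assms by (simp add: field_simps)
  finally show ?thesis .
qed

lemma mult_ln_one_plus_diff_le_one:
  fixes y y' :: real
  assumes "0 \<le> y'" "y' \<le> y"
  shows "y' / (1 + y) * (ln (1 + y) - ln (1 + y')) \<le> 1"
proof -
  have "ln (1 + y) - ln (1 + y') \<le> (y - y') / (1 + y')"
    using ln_one_plus_add_diff_le[of y' "y - y'"] assms by simp
  then have "y' / (1 + y) * (ln (1 + y) - ln (1 + y')) \<le> y' / (1 + y) * ((y - y') / (1 + y'))"
    using assms by (intro mult_left_mono) auto
  also have "\<dots> = (y' * (y - y')) / ((1 + y) * (1 + y'))"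
    by simp
  also have "\<dots> \<le> 1"
  proof -
    have "y' * (y - y') \<le> (1 + y) * (1 + y')"
      using assms by (simp add: algebra_simps)
    then show ?thesis using assms by (simp add: divide_le_eq_1)
  qed
  finally show ?thesis .
qed

lemma le_Prim_add_one:
  fixes p :: "real \<Rightarrow> real"
  assumes mono: "mono_on {0..} p" and lip: "1-lipschitz_on {0..} p" and "p 0 = 0" "0 \<le> v"
  shows "p v \<le> Prim p v + 1"
proof -
  have cont: "continuous_on {0..} p"
    using lip by (rule lipschitz_on_continuous_on)
  have nonneg: "0 \<le> p y" if "0 \<le> y" for y
    using mono_onD[OF mono, of 0 y] that \<open>p 0 = 0\<close> by simp
  show ?thesis
  proof (cases "1 \<le> v")
    case True
    have "p v - 1 \<le> p (v - 1)"
      using lipschitz_onD[OF lip, of v "v - 1"] True by (simp add: dist_real_def)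
    also have "\<dots> \<le> integral {v - 1..v} p"
      using integral_mono_on_ge_left[OF cont mono, of "v - 1" v] True by simp
    also have "\<dots> = Prim p v - Prim p (v - 1)"
      using Prim_diff[OF cont, of "v - 1" v] True by simp
    finally show ?thesis
      using Prim_nonneg[OF cont nonneg, of "v - 1"] by simp
  next
    case False
    have "p v \<le> 1"
      using lipschitz_onD[OF lip, of v 0] \<open>p 0 = 0\<close> False \<open>0 \<le> v\<close> by (simp add: dist_real_def)
    then show ?thesis
      using Prim_nonneg[OF cont nonneg, of v] by simp
  qed
qed

lemma Prim_ln_add_le_of_le:
  fixes p :: "real \<Rightarrow> real" and y y' :: real
  assumes mono: "mono_on {0..} p" and lip: "1-lipschitz_on {0..} p" and p0: "p 0 = 0"
    and "0 \<le> y'" "y' \<le> y"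
  shows "Prim p (ln (1 + (y + y'))) \<le> Prim p (ln (1 + y)) + Prim p (ln (1 + y')) + 3"
proof -
  define u v L r where "u = ln (1 + y)" and "v = ln (1 + y')" and "L = ln (1 + (y + y'))"
    and "r = y' / (1 + y)"
  have cont: "continuous_on {0..} p"
    using lip by (rule lipschitz_on_continuous_on)
  have v0: "0 \<le> v" and vu: "v \<le> u" and uL: "u \<le> L"
    using assms(4,5) by (simp_all add: u_def v_def L_def)
  have r0: "0 \<le> r" and r1: "r \<le> 1"
    using assms(4,5) by (simp_all add: r_def)
  have Lu: "L - u \<le> r"
    unfolding L_def u_def r_def using ln_one_plus_add_diff_le assms(4,5) by simp
  have ruv: "r * (u - v) \<le> 1"
    unfolding r_def u_def v_def using mult_ln_one_plus_diff_le_one assms(4,5) by simp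
  have lip_le: "p a \<le> p b + (a - b)" if "0 \<le> b" "b \<le> a" for a b
    using lipschitz_onD[OF lip, of a b] that by (simp add: dist_real_def)
  have pv: "0 \<le> p v"
    using mono_onD[OF mono, of 0 v] v0 p0 by simp
  have "Prim p L - Prim p u = integral {u..L} p"
    using Prim_diff[OF cont] v0 vu uL by simp
  also have "\<dots> \<le> (L - u) * p L"
    using integral_mono_on_le_right[OF cont mono] v0 vu uL by simp
  also have "\<dots> \<le> r * p L"
    using Lu mono_onD[OF mono, of 0 L] v0 vu uL p0 by (intro mult_right_mono) auto
  also have "\<dots> \<le> r * (p v + (u - v) + r)"
    using lip_le[of u L] lip_le[of v u] v0 vu uL Lu r0 by (intro mult_left_mono) auto
  also have "\<dots> \<le> p v + 2"
    using mult_right_mono[OF r1 pv] mult_left_mono[OF r1 r0] ruv r1 by (simp add: algebra_simps)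
  also have "\<dots> \<le> Prim p v + 3"
    using le_Prim_add_one[OF mono lip p0 v0] by simp
  finally show ?thesis
    unfolding L_def u_def v_def by simp
qed

lemma Prim_ln_add_le:
  fixes p :: "real \<Rightarrow> real" and y y' :: real
  assumes "mono_on {0..} p" "1-lipschitz_on {0..} p" "p 0 = 0" "0 \<le> y" "0 \<le> y'"
  shows "Prim p (ln (1 + (y + y'))) \<le> Prim p (ln (1 + y)) + Prim p (ln (1 + y')) + 3"
proof (cases "y' \<le> y")
  case True
  then show ?thesis
    by (rule Prim_ln_add_le_of_le[OF assms(1-3) assms(5)])
next
  case False
  then have "Prim p (ln (1 + (y' + y))) \<le> Prim p (ln (1 + y')) + Prim p (ln (1 + y)) + 3"
    by (intro Prim_ln_add_le_of_le[OF assms(1-3) assms(4)]) simp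
  then show ?thesis
    by (simp add: add.commute[of y' y])
qed

theorem theorem3p5:
  fixes M :: "'a measure" and f :: "'a \<Rightarrow> real"
  assumes "prob_space M"
    and "integrable M f"
    and "AE x in M. 0 \<le> f x"
  shows "\<exists>\<psi> :: real \<Rightarrow> real.
     (\<forall>y\<ge>0. 0 \<le> \<psi> y)
   \<and> mono_on {0..} \<psi>
   \<and> (\<forall>y\<ge>0. \<forall>z\<ge>0. \<bar>\<psi> y - \<psi> z\<bar> \<le> \<bar>y - z\<bar>)
   \<and> filterlim \<psi> at_top at_top
   \<and> integrable M (\<lambda>x. Prim \<psi> (f x))
   \<and> (\<forall>y\<ge>0. 0 \<le> Prim \<psi> (ln (1 + y)))
   \<and> mono_on {0..} (\<lambda>y. Prim \<psi> (ln (1 + y)))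
   \<and> (\<forall>y\<ge>0. (\<lambda>y. Prim \<psi> (ln (1 + y))) differentiable (at y within {0..}))
   \<and> (\<exists>C>0. \<forall>y\<ge>0. \<forall>y'\<ge>0.
        Prim \<psi> (ln (1 + (y + y'))) \<le> Prim \<psi> (ln (1 + y)) + Prim \<psi> (ln (1 + y')) + C)"
proof -
  obtain n where "mono n" and int: "integrable M (\<lambda>x. \<bar>f x\<bar> * psi_seq n \<bar>f x\<bar>)"
    by (rule obtain_psi_seq_integrable[OF integrable_abs[OF assms(2)] abs_ge_zero])
  let ?\<psi> = "psi_seq n"
  have lip: "1-lipschitz_on {0..} ?\<psi>"
    by (rule lipschitz_psi_seq)
  have cont: "continuous_on {0..} ?\<psi>"
    using lip by (rule lipschitz_on_continuous_on)
  have mono: "mono_on {0..} ?\<psi>"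
    using mono_psi_seq by (rule mono_imp_mono_on)
  show ?thesis
  proof (intro exI[of _ ?\<psi>] conjI)
    show "\<forall>y\<ge>0. 0 \<le> ?\<psi> y"
      by (simp add: psi_seq_nonneg)
    show "mono_on {0..} ?\<psi>"
      by (rule mono)
    show "\<forall>y\<ge>0. \<forall>z\<ge>0. \<bar>?\<psi> y - ?\<psi> z\<bar> \<le> \<bar>y - z\<bar>"
      using lipschitz_onD[OF lip] by (simp add: dist_real_def)
    show "filterlim ?\<psi> at_top at_top"
      using \<open>mono n\<close> by (rule filterlim_psi_seq_at_top)
    show "integrable M (\<lambda>x. Prim ?\<psi> (f x))"
      by (rule integrable_Prim_comp[OF cont psi_seq_nonneg mono borel_measurable_integrable[OF assms(2)] int])
    show "\<forall>y\<ge>0. 0 \<le> Prim ?\<psi> (ln (1 + y))"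
      by (simp add: Prim_nonneg[OF cont psi_seq_nonneg])
    show "mono_on {0..} (\<lambda>y. Prim ?\<psi> (ln (1 + y)))"
      by (intro mono_onI monoD[OF mono_Prim[OF cont psi_seq_nonneg]]) simp
    show "\<forall>y\<ge>0. (\<lambda>y. Prim ?\<psi> (ln (1 + y))) differentiable (at y within {0..})"
      by (simp add: differentiable_Prim_ln[OF cont])
    show "\<exists>C>0. \<forall>y\<ge>0. \<forall>y'\<ge>0.
        Prim ?\<psi> (ln (1 + (y + y'))) \<le> Prim ?\<psi> (ln (1 + y)) + Prim ?\<psi> (ln (1 + y')) + C"
      by (intro exI[of _ "3::real"] conjI allI impI Prim_ln_add_le[OF mono lip psi_seq_zero[of n]]) simp_all
  qed
qed

end
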